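(* Let $B$ be a finite set of Boolean functions. There exists an MSO formula $\theta_{\mathit{extension}}$ over the vocabulary $\tau_{B,\mathit{dl}}$ such that for every $B$-default theory $(W,D)$: $(W,D)$ possesses a stable extension if and only if $\mathcal{A}_{(W,D)}\models\theta_{\mathit{extension}}$.
   Context: $B$-formulae are propositional formulae built from variables using the functions in $B$ (0-ary ones are constants). A $B$-default rule is a triple $\frac{\alpha:\beta}{\gamma}$ of $B$-formulae (prerequisite $\alpha$, justification $\beta$, conclusion $\gamma$); a $B$-default theory $(W,D)$ is a set $W$ of $B$-formulae and a set $D$ of $B$-default rules. For a set $E$ of formulae, $\Gamma(E)$ is the smallest set of formulae with $W\subseteq\Gamma(E)$, $\Gamma(E)$ closed under propositional consequence, and $\gamma\in\Gamma(E)$ whenever $\frac{\alpha:\beta}{\gamma}\in D$, $\alpha\in\Gamma(E)$ and $\neg\beta\notin E$. A stable extension of $(W,D)$ is a set $E$ with $E=\Gamma(E)$. The vocabulary $\tau_{B,\mathit{dl}}$ consists of unary symbols $\mathrm{const}_f$ (for 0-ary $f\in B$), binary symbols $\mathrm{conn}_{f,i}$ ($f\in B$, $1\le i\le\mathrm{arity}(f)$), unary symbols $\mathrm{var},\mathrm{repr},\mathrm{kb},\mathrm{default}$ and binary symbols $\mathrm{prem},\mathrm{just},\mathrm{concl}$. The structure $\mathcal{A}_{(W,D)}$ has as universe the set of subformulae of the formulae in $W\cup\{\alpha,\beta,\gamma,\neg\beta \mid \frac{\alpha:\beta}{\gamma}\in D\}$ together with one new element for each default in $D$; $\mathrm{var}(x)$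 holds iff $x$ is a variable, $\mathrm{repr}(x)$ iff $x$ is one of the formulae of $W$ or one of the $\alpha,\beta,\gamma$ of defaults, $\mathrm{const}_f(x)$ iff $x$ is the constant $f$, $\mathrm{conn}_{f,i}(x,y)$ iff $x$ is the $i$-th argument of the function $f$ at the root of $y$, $\mathrm{kb}(x)$ iff $x\in W$, $\mathrm{default}(x)$ iff $x$ represents a default of $D$, and $\mathrm{prem}(x,y)$ (resp. $\mathrm{just}(x,y)$, $\mathrm{concl}(x,y)$) iff $y$ represents a default $\frac{\alpha:\beta}{\gamma}$ and $x$ is its $\alpha$ (resp. $\beta$, $\gamma$). *)

theory Defs
  imports Main
begin

text \<open>Function symbols have type 'f; ar f is the arity, sem f the Boolean function
  (applied to the list of argument values).
  Neg is an additional negation constructor, needed because default rules refer to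
  the negated justification (which need not be a B-formula).\<close>

datatype 'f form = Var nat | Neg "'f form" | App 'f "'f form list"

fun eval :: "('f \<Rightarrow> bool list \<Rightarrow> bool) \<Rightarrow> (nat \<Rightarrow> bool) \<Rightarrow> 'f form \<Rightarrow> bool" where
  "eval sem v (Var n) = v n"
| "eval sem v (Neg \<phi>) = (\<not> eval sem v \<phi>)"
| "eval sem v (App f args) = sem f (map (eval sem v) args)"

fun is_Bform :: "'f set \<Rightarrow> ('f \<Rightarrow> nat) \<Rightarrow> 'f form \<Rightarrow> bool" where
  "is_Bform B ar (Var n) = True"
| "is_Bform B ar (Neg \<phi>) = False"
| "is_Bform B ar (App f args) = (f \<in> B \<and> length args = ar f \<and> (\<forall>a \<in> set args. is_Bform B ar a))"

text \<open>The formula language in which extensions live: B-formulae plus negation.\<close>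
fun in_lang :: "'f set \<Rightarrow> ('f \<Rightarrow> nat) \<Rightarrow> 'f form \<Rightarrow> bool" where
  "in_lang B ar (Var n) = True"
| "in_lang B ar (Neg \<phi>) = in_lang B ar \<phi>"
| "in_lang B ar (App f args) = (f \<in> B \<and> length args = ar f \<and> (\<forall>a \<in> set args. in_lang B ar a))"

fun subformulas :: "'f form \<Rightarrow> 'f form set" where
  "subformulas (Var n) = {Var n}"
| "subformulas (Neg \<phi>) = insert (Neg \<phi>) (subformulas \<phi>)"
| "subformulas (App f args) = insert (App f args) (\<Union>a \<in> set args. subformulas a)"

definition Cn :: "'f set \<Rightarrow> ('f \<Rightarrow> nat) \<Rightarrow> ('f \<Rightarrow> bool list \<Rightarrow> bool) \<Rightarrow> 'f form set \<Rightarrow> 'f form set" where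
  "Cn B ar sem S = {\<phi>. in_lang B ar \<phi> \<and> (\<forall>v. (\<forall>\<psi>\<in>S. eval sem v \<psi>) \<longrightarrow> eval sem v \<phi>)}"

type_synonym 'f default_rule = "'f form \<times> 'f form \<times> 'f form"  (* (prerequisite, justification, conclusion) *)

definition default_theory :: "'f set \<Rightarrow> ('f \<Rightarrow> nat) \<Rightarrow> 'f form set \<Rightarrow> 'f default_rule set \<Rightarrow> bool" where
  "default_theory B ar W D \<longleftrightarrow> finite W \<and> finite D \<and> (\<forall>\<phi>\<in>W. is_Bform B ar \<phi>) \<and>
     (\<forall>(\<alpha>,\<beta>,\<gamma>)\<in>D. is_Bform B ar \<alpha> \<and> is_Bform B ar \<beta> \<and> is_Bform B ar \<gamma>)"

definition Gamma :: "'f set \<Rightarrow> ('f \<Rightarrow> nat) \<Rightarrow> ('f \<Rightarrow> bool list \<Rightarrow> bool) \<Rightarrow>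
    'f form set \<Rightarrow> 'f default_rule set \<Rightarrow> 'f form set \<Rightarrow> 'f form set" where
  "Gamma B ar sem W D E = \<Inter>{S. W \<subseteq> S \<and> Cn B ar sem S \<subseteq> S \<and>
       (\<forall>(\<alpha>,\<beta>,\<gamma>)\<in>D. \<alpha> \<in> S \<and> Neg \<beta> \<notin> E \<longrightarrow> \<gamma> \<in> S)}"

definition stable_extension :: "'f set \<Rightarrow> ('f \<Rightarrow> nat) \<Rightarrow> ('f \<Rightarrow> bool list \<Rightarrow> bool) \<Rightarrow>
    'f form set \<Rightarrow> 'f default_rule set \<Rightarrow> 'f form set \<Rightarrow> bool" where
  "stable_extension B ar sem W D E \<longleftrightarrow> E = Gamma B ar sem W D E"

definition has_stable_extension :: "'f set \<Rightarrow> ('f \<Rightarrow> nat) \<Rightarrow> ('f \<Rightarrow> bool list \<Rightarrow> bool) \<Rightarrow>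
    'f form set \<Rightarrow> 'f default_rule set \<Rightarrow> bool" where
  "has_stable_extension B ar sem W D \<longleftrightarrow> (\<exists>E. stable_extension B ar sem W D E)"

datatype 'r mso =
    Rel 'r "nat list"
  | Eq nat nat
  | Mem nat nat          (* Mem x X : first-order x is in set variable X *)
  | Not "'r mso"
  | And "'r mso" "'r mso"
  | Ex1 nat "'r mso"     (* first-order existential *)
  | Ex2 nat "'r mso"     (* monadic second-order existential *)

fun mso_sat :: "'a set \<Rightarrow> ('r \<Rightarrow> 'a list \<Rightarrow> bool) \<Rightarrow> (nat \<Rightarrow> 'a) \<Rightarrow> (nat \<Rightarrow> 'a set) \<Rightarrow> 'r mso \<Rightarrow> bool" where
  "mso_sat U I v1 v2 (Rel r xs) = I r (map v1 xs)"
| "mso_sat U I v1 v2 (Eq x y) = (v1 x = v1 y)"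
| "mso_sat U I v1 v2 (Mem x X) = (v1 x \<in> v2 X)"
| "mso_sat U I v1 v2 (Not \<phi>) = (\<not> mso_sat U I v1 v2 \<phi>)"
| "mso_sat U I v1 v2 (And \<phi> \<psi>) = (mso_sat U I v1 v2 \<phi> \<and> mso_sat U I v1 v2 \<psi>)"
| "mso_sat U I v1 v2 (Ex1 x \<phi>) = (\<exists>a\<in>U. mso_sat U I (v1(x := a)) v2 \<phi>)"
| "mso_sat U I v1 v2 (Ex2 X \<phi>) = (\<exists>A. A \<subseteq> U \<and> mso_sat U I v1 (v2(X := A)) \<phi>)"

fun fv1 :: "'r mso \<Rightarrow> nat set" where
  "fv1 (Rel r xs) = set xs"
| "fv1 (Eq x y) = {x, y}"
| "fv1 (Mem x X) = {x}"
| "fv1 (Not \<phi>) = fv1 \<phi>"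
| "fv1 (And \<phi> \<psi>) = fv1 \<phi> \<union> fv1 \<psi>"
| "fv1 (Ex1 x \<phi>) = fv1 \<phi> - {x}"
| "fv1 (Ex2 X \<phi>) = fv1 \<phi>"

fun fv2 :: "'r mso \<Rightarrow> nat set" where
  "fv2 (Rel r xs) = {}"
| "fv2 (Eq x y) = {}"
| "fv2 (Mem x X) = {X}"
| "fv2 (Not \<phi>) = fv2 \<phi>"
| "fv2 (And \<phi> \<psi>) = fv2 \<phi> \<union> fv2 \<psi>"
| "fv2 (Ex1 x \<phi>) = fv2 \<phi>"
| "fv2 (Ex2 X \<phi>) = fv2 \<phi> - {X}"

definition mso_sentence :: "'r mso \<Rightarrow> bool" where
  "mso_sentence \<phi> \<longleftrightarrow> fv1 \<phi> = {} \<and> fv2 \<phi> = {}"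

fun mso_over :: "('r \<Rightarrow> bool) \<Rightarrow> ('r \<Rightarrow> nat) \<Rightarrow> 'r mso \<Rightarrow> bool" where
  "mso_over V arity (Rel r xs) = (V r \<and> length xs = arity r)"
| "mso_over V arity (Eq x y) = True"
| "mso_over V arity (Mem x X) = True"
| "mso_over V arity (Not \<phi>) = mso_over V arity \<phi>"
| "mso_over V arity (And \<phi> \<psi>) = (mso_over V arity \<phi> \<and> mso_over V arity \<psi>)"
| "mso_over V arity (Ex1 x \<phi>) = mso_over V arity \<phi>"
| "mso_over V arity (Ex2 X \<phi>) = mso_over V arity \<phi>"

text \<open>A sentence holds in a structure (U, I); the dummy assignments are irrelevant for sentences.\<close>
definition models :: "'a set \<Rightarrow> ('r \<Rightarrow> 'a list \<Rightarrow> bool) \<Rightarrow> 'r mso \<Rightarrow> bool" where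
  "models U I \<phi> \<longleftrightarrow> mso_sat U I (\<lambda>_. undefined) (\<lambda>_. {}) \<phi>"

datatype 'f dl_sym =
    SConst 'f | SConn 'f nat | SVar | SRepr | SKb | SDefault | SPrem | SJust | SConcl

fun dl_arity :: "'f dl_sym \<Rightarrow> nat" where
  "dl_arity (SConst f) = 1"
| "dl_arity (SConn f i) = 2"
| "dl_arity SVar = 1"
| "dl_arity SRepr = 1"
| "dl_arity SKb = 1"
| "dl_arity SDefault = 1"
| "dl_arity SPrem = 2"
| "dl_arity SJust = 2"
| "dl_arity SConcl = 2"

fun in_tau_dl :: "'f set \<Rightarrow> ('f \<Rightarrow> nat) \<Rightarrow> 'f dl_sym \<Rightarrow> bool" where
  "in_tau_dl B ar (SConst f) = (f \<in> B \<and> ar f = 0)"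
| "in_tau_dl B ar (SConn f i) = (f \<in> B \<and> 1 \<le> i \<and> i \<le> ar f)"
| "in_tau_dl B ar _ = True"

text \<open>Universe: subformulae (left summand) plus one new element per default (right summand).\<close>
type_synonym 'f dl_elem = "'f form + 'f default_rule"

definition dl_universe :: "'f form set \<Rightarrow> 'f default_rule set \<Rightarrow> 'f dl_elem set" where
  "dl_universe W D =
     Inl ` (\<Union>\<phi> \<in> W \<union> (\<Union>(\<alpha>,\<beta>,\<gamma>)\<in>D. {\<alpha>, \<beta>, \<gamma>, Neg \<beta>}). subformulas \<phi>) \<union> Inr ` D"

definition dl_repr :: "'f form set \<Rightarrow> 'f default_rule set \<Rightarrow> 'f form set" where
  "dl_repr W D = W \<union> (\<Union>(\<alpha>,\<beta>,\<gamma>)\<in>D. {\<alpha>, \<beta>, \<gamma>})"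

fun dl_rel :: "'f form set \<Rightarrow> 'f default_rule set \<Rightarrow> 'f dl_sym \<Rightarrow> 'f dl_elem list \<Rightarrow> bool" where
  "dl_rel W D (SConst f) xs = (\<exists>x. xs = [x] \<and> x \<in> dl_universe W D \<and> x = Inl (App f []))"
| "dl_rel W D (SConn f i) xs = (\<exists>x y args. xs = [x, y] \<and> x \<in> dl_universe W D \<and> y \<in> dl_universe W D \<and>
       y = Inl (App f args) \<and> 1 \<le> i \<and> i \<le> length args \<and> x = Inl (args ! (i - 1)))"
| "dl_rel W D SVar xs = (\<exists>x n. xs = [x] \<and> x \<in> dl_universe W D \<and> x = Inl (Var n))"
| "dl_rel W D SRepr xs = (\<exists>\<phi>. xs = [Inl \<phi>] \<and> \<phi> \<in> dl_repr W D)"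
| "dl_rel W D SKb xs = (\<exists>\<phi>. xs = [Inl \<phi>] \<and> \<phi> \<in> W)"
| "dl_rel W D SDefault xs = (\<exists>d. xs = [Inr d] \<and> d \<in> D)"
| "dl_rel W D SPrem xs = (\<exists>\<alpha> \<beta> \<gamma>. xs = [Inl \<alpha>, Inr (\<alpha>,\<beta>,\<gamma>)] \<and> (\<alpha>,\<beta>,\<gamma>) \<in> D)"
| "dl_rel W D SJust xs = (\<exists>\<alpha> \<beta> \<gamma>. xs = [Inl \<beta>, Inr (\<alpha>,\<beta>,\<gamma>)] \<and> (\<alpha>,\<beta>,\<gamma>) \<in> D)"
| "dl_rel W D SConcl xs = (\<exists>\<alpha> \<beta> \<gamma>. xs = [Inl \<gamma>, Inr (\<alpha>,\<beta>,\<gamma>)] \<and> (\<alpha>,\<beta>,\<gamma>) \<in> D)"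

end

theory Submission
  imports Defs
begin

text \<open>
  By Reiter's fixed-point characterisation, a stable extension is determined by its set of
  generating defaults G: the extension is Cn(W \<union> concl(G)), and G is the least set of defaults
  closed under applying every default whose prerequisite follows from W \<union> concl(G) and whose
  justification is consistent with Cn(W \<union> concl(G)). So an extension exists iff some G \<subseteq> D is
  least among the sets H \<subseteq> D closed in this sense; this quantifies over sets of defaults only,
  i.e. over subsets of the universe. Propositional consequence S \<turnstile> \<phi> is MSO-definable
  relative to the structure: a valuation corresponds to a set V of subformula nodes labelled
  "true" that respects the Boolean functions of B at every node, and S \<turnstile> \<phi> says that every
  such V containing S contains \<phi>.
\<close>

definition mso_true :: "'r mso" where "mso_true = Not (Ex1 0 (Not (Eq 0 0)))"
definition mso_imp :: "'r mso \<Rightarrow> 'r mso \<Rightarrow> 'r mso" where "mso_imp a b = Not (And a (Not b))"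
definition mso_iff :: "'r mso \<Rightarrow> 'r mso \<Rightarrow> 'r mso" where "mso_iff a b = And (mso_imp a b) (mso_imp b a)"
definition mso_all1 :: "nat \<Rightarrow> 'r mso \<Rightarrow> 'r mso" where "mso_all1 x p = Not (Ex1 x (Not p))"
definition mso_all2 :: "nat \<Rightarrow> 'r mso \<Rightarrow> 'r mso" where "mso_all2 X p = Not (Ex2 X (Not p))"
definition mso_lit :: "bool \<Rightarrow> 'r mso \<Rightarrow> 'r mso" where "mso_lit b p = (if b then p else Not p)"

fun mso_conj :: "'r mso list \<Rightarrow> 'r mso" where
  "mso_conj [] = mso_true"
| "mso_conj (p # ps) = And p (mso_conj ps)"

definition mso_disj :: "'r mso list \<Rightarrow> 'r mso" where
  "mso_disj ps = Not (mso_conj (map Not ps))"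

lemmas mso_connective_defs = mso_true_def mso_imp_def mso_iff_def mso_all1_def mso_all2_def mso_lit_def

lemma sat_mso_connectives [simp]:
  "mso_sat U I v1 v2 mso_true"
  "mso_sat U I v1 v2 (mso_imp a b) \<longleftrightarrow> (mso_sat U I v1 v2 a \<longrightarrow> mso_sat U I v1 v2 b)"
  "mso_sat U I v1 v2 (mso_iff a b) \<longleftrightarrow> (mso_sat U I v1 v2 a \<longleftrightarrow> mso_sat U I v1 v2 b)"
  "mso_sat U I v1 v2 (mso_all1 x p) \<longleftrightarrow> (\<forall>a\<in>U. mso_sat U I (v1(x := a)) v2 p)"
  "mso_sat U I v1 v2 (mso_all2 X p) \<longleftrightarrow> (\<forall>A. A \<subseteq> U \<longrightarrow> mso_sat U I v1 (v2(X := A)) p)"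
  "mso_sat U I v1 v2 (mso_lit c p) \<longleftrightarrow> (mso_sat U I v1 v2 p \<longleftrightarrow> c)"
  by (auto simp: mso_connective_defs)

lemma sat_mso_conj [simp]: "mso_sat U I v1 v2 (mso_conj ps) \<longleftrightarrow> (\<forall>p\<in>set ps. mso_sat U I v1 v2 p)"
  by (induction ps) auto

lemma sat_mso_disj [simp]: "mso_sat U I v1 v2 (mso_disj ps) \<longleftrightarrow> (\<exists>p\<in>set ps. mso_sat U I v1 v2 p)"
  by (simp add: mso_disj_def)

lemma fv_mso_connectives [simp]:
  "fv1 (mso_true :: 'r mso) = {}" "fv2 (mso_true :: 'r mso) = {}"
  "fv1 (mso_imp a b) = fv1 a \<union> fv1 b" "fv2 (mso_imp a b) = fv2 a \<union> fv2 b"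
  "fv1 (mso_iff a b) = fv1 a \<union> fv1 b" "fv2 (mso_iff a b) = fv2 a \<union> fv2 b"
  "fv1 (mso_all1 x p) = fv1 p - {x}" "fv2 (mso_all1 x p) = fv2 p"
  "fv1 (mso_all2 X p) = fv1 p" "fv2 (mso_all2 X p) = fv2 p - {X}"
  "fv1 (mso_lit c p) = fv1 p" "fv2 (mso_lit c p) = fv2 p"
  by (auto simp: mso_connective_defs)

lemma fv_mso_conj [simp]: "fv1 (mso_conj ps) = \<Union>(fv1 ` set ps)" "fv2 (mso_conj ps) = \<Union>(fv2 ` set ps)"
  by (induction ps) auto

lemma fv_mso_disj [simp]: "fv1 (mso_disj ps) = \<Union>(fv1 ` set ps)" "fv2 (mso_disj ps) = \<Union>(fv2 ` set ps)"
  by (auto simp: mso_disj_def)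

lemma mso_over_mso_connectives [simp]:
  "mso_over V arity (mso_true :: 'r mso)"
  "mso_over V arity (mso_imp a b) \<longleftrightarrow> mso_over V arity a \<and> mso_over V arity b"
  "mso_over V arity (mso_iff a b) \<longleftrightarrow> mso_over V arity a \<and> mso_over V arity b"
  "mso_over V arity (mso_all1 x p) \<longleftrightarrow> mso_over V arity p"
  "mso_over V arity (mso_all2 X p) \<longleftrightarrow> mso_over V arity p"
  "mso_over V arity (mso_lit c p) \<longleftrightarrow> mso_over V arity p"
  by (auto simp: mso_connective_defs)

lemma mso_over_mso_conj [simp]: "mso_over V arity (mso_conj ps) \<longleftrightarrow> (\<forall>p\<in>set ps. mso_over V arity p)"
  by (induction ps) auto

lemma mso_over_mso_disj [simp]: "mso_over V arity (mso_disj ps) \<longleftrightarrow> (\<forall>p\<in>set ps. mso_over V arity p)"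
  by (simp add: mso_disj_def)

subsection \<open>Reiter's characterisation of stable extensions\<close>

lemma is_Bform_in_lang: "is_Bform B ar \<phi> \<Longrightarrow> in_lang B ar \<phi>"
  by (induction \<phi>) auto

lemma Cn_mono: "S \<subseteq> T \<Longrightarrow> Cn B ar sem S \<subseteq> Cn B ar sem T"
  by (auto simp: Cn_def)

lemma subset_Cn: "\<forall>\<phi>\<in>S. in_lang B ar \<phi> \<Longrightarrow> S \<subseteq> Cn B ar sem S"
  by (auto simp: Cn_def)

lemma Cn_Cn_subset: "Cn B ar sem (Cn B ar sem S) \<subseteq> Cn B ar sem S"
  by (auto simp: Cn_def)

definition concl_base :: "'f form set \<Rightarrow> 'f default_rule set \<Rightarrow> 'f form set" where
  "concl_base W G = W \<union> (\<lambda>d. snd (snd d)) ` G"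

lemma concl_base_in_lang:
  assumes "default_theory B ar W D" and "G \<subseteq> D"
  shows "\<forall>\<phi>\<in>concl_base W G. in_lang B ar \<phi>"
  using assms is_Bform_in_lang by (fastforce simp: default_theory_def concl_base_def)

context
  fixes B :: "'f set" and ar :: "'f \<Rightarrow> nat" and sem :: "'f \<Rightarrow> bool list \<Rightarrow> bool"
begin

definition closed_under_defaults ::
    "'f form set \<Rightarrow> 'f default_rule set \<Rightarrow> 'f form set \<Rightarrow> 'f default_rule set \<Rightarrow> bool" where
  "closed_under_defaults W D E H \<longleftrightarrow>
     (\<forall>d\<in>D. Neg (fst (snd d)) \<notin> E \<and> fst d \<in> Cn B ar sem (concl_base W H) \<longrightarrow> d \<in> H)"

definition generating_defaults ::
    "'f form set \<Rightarrow> 'f default_rule set \<Rightarrow> 'f form set \<Rightarrow> 'f default_rule set" where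
  "generating_defaults W D E = \<Inter>{H. H \<subseteq> D \<and> closed_under_defaults W D E H}"

lemma generating_defaults_subset: "generating_defaults W D E \<subseteq> D"
  unfolding generating_defaults_def closed_under_defaults_def by blast

lemma generating_defaults_least:
  "H \<subseteq> D \<Longrightarrow> closed_under_defaults W D E H \<Longrightarrow> generating_defaults W D E \<subseteq> H"
  unfolding generating_defaults_def by blast

lemma closed_generating_defaults: "closed_under_defaults W D E (generating_defaults W D E)"
  unfolding closed_under_defaults_def
proof (intro ballI impI)
  fix d assume d: "d \<in> D"
    and app: "Neg (fst (snd d)) \<notin> E \<and> fst d \<in> Cn B ar sem (concl_base W (generating_defaults W D E))"
  show "d \<in> generating_defaults W D E" unfolding generating_defaults_def
  proof (rule InterI)
    fix H assume H: "H \<in> {H. H \<subseteq> D \<and> closed_under_defaults W D E H}"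
    then have "generating_defaults W D E \<subseteq> H" using generating_defaults_least by blast
    then have "concl_base W (generating_defaults W D E) \<subseteq> concl_base W H"
      by (auto simp: concl_base_def)
    then show "d \<in> H" using H app d Cn_mono unfolding closed_under_defaults_def by blast
  qed
qed

lemma Gamma_least:
  "W \<subseteq> S \<Longrightarrow> Cn B ar sem S \<subseteq> S \<Longrightarrow> (\<forall>(\<alpha>,\<beta>,\<gamma>)\<in>D. \<alpha> \<in> S \<and> Neg \<beta> \<notin> E \<longrightarrow> \<gamma> \<in> S)
    \<Longrightarrow> Gamma B ar sem W D E \<subseteq> S"
  unfolding Gamma_def by blast

lemma W_subset_Gamma: "W \<subseteq> Gamma B ar sem W D E"
  unfolding Gamma_def by blast

lemma Cn_Gamma_subset: "Cn B ar sem (Gamma B ar sem W D E) \<subseteq> Gamma B ar sem W D E"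
proof -
  have "Cn B ar sem (Gamma B ar sem W D E) \<subseteq> S"
    if "S \<in> {S. W \<subseteq> S \<and> Cn B ar sem S \<subseteq> S \<and> (\<forall>(\<alpha>,\<beta>,\<gamma>)\<in>D. \<alpha> \<in> S \<and> Neg \<beta> \<notin> E \<longrightarrow> \<gamma> \<in> S)}"
    for S
    using that Cn_mono[of "Gamma B ar sem W D E" S] unfolding Gamma_def by blast
  then show ?thesis unfolding Gamma_def by blast
qed

lemma Gamma_closed_under_default:
  "(\<alpha>,\<beta>,\<gamma>) \<in> D \<Longrightarrow> \<alpha> \<in> Gamma B ar sem W D E \<Longrightarrow> Neg \<beta> \<notin> E \<Longrightarrow> \<gamma> \<in> Gamma B ar sem W D E"
  unfolding Gamma_def by blast

lemma Gamma_eq_Cn_generating_defaults: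
  assumes dt: "default_theory B ar W D"
  shows "Gamma B ar sem W D E = Cn B ar sem (concl_base W (generating_defaults W D E))"
proof
  let ?G = "generating_defaults W D E"
  let ?S = "Cn B ar sem (concl_base W ?G)"
  have base: "concl_base W ?G \<subseteq> ?S"
    using subset_Cn concl_base_in_lang[OF dt generating_defaults_subset] by blast
  show "Gamma B ar sem W D E \<subseteq> ?S"
  proof (rule Gamma_least)
    show "W \<subseteq> ?S" using base by (auto simp: concl_base_def)
    show "Cn B ar sem ?S \<subseteq> ?S" by (rule Cn_Cn_subset)
    show "\<forall>(\<alpha>,\<beta>,\<gamma>)\<in>D. \<alpha> \<in> ?S \<and> Neg \<beta> \<notin> E \<longrightarrow> \<gamma> \<in> ?S"
    proof clarify
      fix \<alpha> \<beta> \<gamma> assume "(\<alpha>,\<beta>,\<gamma>) \<in> D" "\<alpha> \<in> ?S" "Neg \<beta> \<notin> E"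
      then have "(\<alpha>,\<beta>,\<gamma>) \<in> ?G"
        using closed_generating_defaults unfolding closed_under_defaults_def by fastforce
      then show "\<gamma> \<in> ?S" using base by (force simp: concl_base_def)
    qed
  qed
  let ?\<Gamma> = "Gamma B ar sem W D E"
  define H where "H = {d\<in>D. snd (snd d) \<in> ?\<Gamma>}"
  have H_base: "concl_base W H \<subseteq> ?\<Gamma>"
    using W_subset_Gamma by (auto simp: concl_base_def H_def)
  have "closed_under_defaults W D E H" unfolding closed_under_defaults_def
  proof (intro ballI impI)
    fix d assume d: "d \<in> D" and app: "Neg (fst (snd d)) \<notin> E \<and> fst d \<in> Cn B ar sem (concl_base W H)"
    then have "fst d \<in> Cn B ar sem ?\<Gamma>" using H_base Cn_mono by blast
    then have "fst d \<in> ?\<Gamma>" using Cn_Gamma_subset by blast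
    then show "d \<in> H"
      using Gamma_closed_under_default[of "fst d" "fst (snd d)" "snd (snd d)"] d app by (auto simp: H_def)
  qed
  then have "?G \<subseteq> H" by (intro generating_defaults_least) (auto simp: H_def)
  then have "concl_base W ?G \<subseteq> ?\<Gamma>" using H_base by (auto simp: concl_base_def)
  then show "?S \<subseteq> ?\<Gamma>" using Cn_mono Cn_Gamma_subset by blast
qed

definition least_closed_generators :: "'f form set \<Rightarrow> 'f default_rule set \<Rightarrow> 'f default_rule set \<Rightarrow> bool" where
  "least_closed_generators W D G \<longleftrightarrow> G \<subseteq> D \<and>
     closed_under_defaults W D (Cn B ar sem (concl_base W G)) G \<and>
     (\<forall>H\<subseteq>D. closed_under_defaults W D (Cn B ar sem (concl_base W G)) H \<longrightarrow> G \<subseteq> H)"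

lemma has_stable_extension_iff_least_closed_generators:
  assumes dt: "default_theory B ar W D"
  shows "has_stable_extension B ar sem W D \<longleftrightarrow> (\<exists>G. least_closed_generators W D G)"
proof
  assume "has_stable_extension B ar sem W D"
  then obtain E where "E = Gamma B ar sem W D E"
    unfolding has_stable_extension_def stable_extension_def by blast
  then have E: "Cn B ar sem (concl_base W (generating_defaults W D E)) = E"
    using Gamma_eq_Cn_generating_defaults[OF dt, of E] by metis
  have "least_closed_generators W D (generating_defaults W D E)"
    unfolding least_closed_generators_def E
    using generating_defaults_subset closed_generating_defaults generating_defaults_least by blast
  then show "\<exists>G. least_closed_generators W D G" ..
next
  assume "\<exists>G. least_closed_generators W D G"
  then obtain G where G: "least_closed_generators W D G" ..
  let ?E = "Cn B ar sem (concl_base W G)"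
  have "generating_defaults W D ?E = G"
    using G generating_defaults_least[of G D W ?E] generating_defaults_subset[of W D ?E]
      closed_generating_defaults[of W D ?E]
    unfolding least_closed_generators_def by blast
  then have "stable_extension B ar sem W D ?E"
    unfolding stable_extension_def using Gamma_eq_Cn_generating_defaults[OF dt] by simp
  then show "has_stable_extension B ar sem W D"
    unfolding has_stable_extension_def by blast
qed

end

lemma subformulas_refl [simp]: "\<phi> \<in> subformulas \<phi>"
  by (cases \<phi>) auto

lemma subformulas_trans: "\<psi> \<in> subformulas \<phi> \<Longrightarrow> subformulas \<psi> \<subseteq> subformulas \<phi>"
  by (induction \<phi>) auto

lemma is_Bform_subformula: "is_Bform B ar \<phi> \<Longrightarrow> \<psi> \<in> subformulas \<phi> \<Longrightarrow> is_Bform B ar \<psi>"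
  by (induction \<phi>) auto

definition dl_roots :: "'f form set \<Rightarrow> 'f default_rule set \<Rightarrow> 'f form set" where
  "dl_roots W D = W \<union> (\<Union>(\<alpha>,\<beta>,\<gamma>)\<in>D. {\<alpha>, \<beta>, \<gamma>, Neg \<beta>})"

definition dl_forms :: "'f form set \<Rightarrow> 'f default_rule set \<Rightarrow> 'f form set" where
  "dl_forms W D = \<Union>(subformulas ` dl_roots W D)"

lemma in_dl_roots_iff:
  "\<phi> \<in> dl_roots W D \<longleftrightarrow>
     \<phi> \<in> W \<or> (\<exists>\<alpha> \<beta> \<gamma>. (\<alpha>,\<beta>,\<gamma>) \<in> D \<and> (\<phi> = \<alpha> \<or> \<phi> = \<beta> \<or> \<phi> = \<gamma> \<or> \<phi> = Neg \<beta>))"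
  unfolding dl_roots_def by force

lemma dl_universe_eq: "dl_universe W D = Inl ` dl_forms W D \<union> Inr ` D"
  unfolding dl_universe_def dl_forms_def dl_roots_def ..

lemma Inl_in_dl_universe [simp]: "Inl \<phi> \<in> dl_universe W D \<longleftrightarrow> \<phi> \<in> dl_forms W D"
  unfolding dl_universe_eq by blast

lemma Inr_in_dl_universe [simp]: "Inr d \<in> dl_universe W D \<longleftrightarrow> d \<in> D"
  unfolding dl_universe_eq by blast

lemma dl_roots_in_dl_forms: "\<phi> \<in> dl_roots W D \<Longrightarrow> \<phi> \<in> dl_forms W D"
  unfolding dl_forms_def using subformulas_refl by blast

lemma arg_in_dl_forms: "App f args \<in> dl_forms W D \<Longrightarrow> a \<in> set args \<Longrightarrow> a \<in> dl_forms W D"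
proof -
  assume "App f args \<in> dl_forms W D" and a: "a \<in> set args"
  then obtain \<phi> where \<phi>: "\<phi> \<in> dl_roots W D" and "App f args \<in> subformulas \<phi>"
    unfolding dl_forms_def by blast
  moreover have "a \<in> subformulas (App f args)" using a by force
  ultimately show ?thesis unfolding dl_forms_def using subformulas_trans by blast
qed

lemma kb_in_dl_forms: "\<phi> \<in> W \<Longrightarrow> \<phi> \<in> dl_forms W D"
  by (rule dl_roots_in_dl_forms) (simp add: in_dl_roots_iff)

lemma default_parts_in_dl_forms:
  "(\<alpha>,\<beta>,\<gamma>) \<in> D \<Longrightarrow> \<alpha> \<in> dl_forms W D \<and> \<beta> \<in> dl_forms W D \<and> \<gamma> \<in> dl_forms W D"
  using dl_roots_in_dl_forms in_dl_roots_iff by metis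

lemma concl_base_in_dl_forms:
  assumes dt: "default_theory B ar W D" and G: "G \<subseteq> D"
  shows "\<forall>\<psi>\<in>concl_base W G. \<psi> \<in> dl_forms W D \<and> is_Bform B ar \<psi>"
proof
  fix \<psi> assume \<psi>: "\<psi> \<in> concl_base W G"
  show "\<psi> \<in> dl_forms W D \<and> is_Bform B ar \<psi>"
  proof (cases "\<psi> \<in> W")
    case True
    then show ?thesis using dt kb_in_dl_forms unfolding default_theory_def by blast
  next
    case False
    then obtain \<alpha> \<beta> where d: "(\<alpha>,\<beta>,\<psi>) \<in> D" using \<psi> G unfolding concl_base_def by force
    then show ?thesis using dt default_parts_in_dl_forms[OF d] unfolding default_theory_def by fastforce
  qed
qed

lemma App_in_dl_forms_is_Bform:
  assumes dt: "default_theory B ar W D" and app: "App f args \<in> dl_forms W D"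
  shows "is_Bform B ar (App f args)"
proof -
  obtain \<phi> where \<phi>: "\<phi> \<in> dl_roots W D" and sub: "App f args \<in> subformulas \<phi>"
    using app unfolding dl_forms_def by blast
  show ?thesis
  proof (cases "\<phi> \<in> W")
    case True
    then show ?thesis using dt sub is_Bform_subformula unfolding default_theory_def by blast
  next
    case False
    then obtain \<alpha> \<beta> \<gamma> where d: "(\<alpha>,\<beta>,\<gamma>) \<in> D" and "\<phi> = \<alpha> \<or> \<phi> = \<beta> \<or> \<phi> = \<gamma> \<or> \<phi> = Neg \<beta>"
      using \<phi> in_dl_roots_iff by blast
    moreover have "is_Bform B ar \<alpha>" "is_Bform B ar \<beta>" "is_Bform B ar \<gamma>"
      using dt d unfolding default_theory_def by auto
    ultimately have "\<exists>\<xi>. is_Bform B ar \<xi> \<and> App f args \<in> subformulas \<xi>"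
      using sub by auto
    then show ?thesis using is_Bform_subformula by blast
  qed
qed

subsection \<open>Labellings respecting the Boolean functions\<close>

text \<open>A node y is recognised as an application of f with ar f > 0 by having a first argument;
  V is read as the set of nodes labelled true.\<close>
definition consistent_labelling :: "'f set \<Rightarrow> ('f \<Rightarrow> nat) \<Rightarrow> ('f \<Rightarrow> bool list \<Rightarrow> bool) \<Rightarrow>
    'a set \<Rightarrow> ('f dl_sym \<Rightarrow> 'a list \<Rightarrow> bool) \<Rightarrow> 'a set \<Rightarrow> bool" where
  "consistent_labelling B ar sem U I V \<longleftrightarrow> (\<forall>f\<in>B.
     (ar f = 0 \<longrightarrow> (\<forall>y\<in>U. I (SConst f) [y] \<longrightarrow> (y \<in> V \<longleftrightarrow> sem f []))) \<and>
     (ar f \<noteq> 0 \<longrightarrow> (\<forall>y\<in>U. (\<exists>x\<in>U. I (SConn f 1) [x,y]) \<longrightarrow>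
        (y \<in> V \<longleftrightarrow> (\<exists>bs. length bs = ar f \<and> sem f bs \<and>
           (\<forall>i<ar f. \<exists>x\<in>U. I (SConn f (Suc i)) [x,y] \<and> (x \<in> V \<longleftrightarrow> bs ! i)))))))"

definition consistent_at_fm :: "('f \<Rightarrow> nat) \<Rightarrow> ('f \<Rightarrow> bool list \<Rightarrow> bool) \<Rightarrow> nat \<Rightarrow> 'f \<Rightarrow> 'f dl_sym mso" where
  "consistent_at_fm ar sem V f =
     (if ar f = 0 then mso_all1 3 (mso_imp (Rel (SConst f) [3]) (mso_lit (sem f []) (Mem 3 V)))
      else mso_all1 3 (mso_imp (Ex1 4 (Rel (SConn f 1) [4,3])) (mso_iff (Mem 3 V)
        (mso_disj (map (\<lambda>bs. mso_conj (map (\<lambda>i. Ex1 4 (And (Rel (SConn f (Suc i)) [4,3])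
                                                   (mso_lit (bs ! i) (Mem 4 V))))
                                       [0..<ar f]))
          (filter (sem f) (List.n_lists (ar f) [True, False])))))))"

definition consistent_fm :: "'f set \<Rightarrow> ('f \<Rightarrow> nat) \<Rightarrow> ('f \<Rightarrow> bool list \<Rightarrow> bool) \<Rightarrow> nat \<Rightarrow> 'f dl_sym mso" where
  "consistent_fm B ar sem V = mso_conj (map (consistent_at_fm ar sem V) (SOME fs. set fs = B))"

lemma fv_consistent_fm: "fv1 (consistent_fm B ar sem V) = {}" "fv2 (consistent_fm B ar sem V) \<subseteq> {V}"
  by (auto simp: consistent_fm_def consistent_at_fm_def split: if_splits)

lemma set_SOME_list: "finite B \<Longrightarrow> set (SOME fs. set fs = B) = B"
  by (metis (mono_tags) finite_list someI_ex)

lemma mso_over_consistent_fm: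
  "finite B \<Longrightarrow> mso_over (in_tau_dl B ar) dl_arity (consistent_fm B ar sem V)"
  by (auto simp: consistent_fm_def consistent_at_fm_def set_SOME_list)

lemma sat_consistent_fm:
  assumes "finite B"
  shows "mso_sat U I v1 v2 (consistent_fm B ar sem V) \<longleftrightarrow> consistent_labelling B ar sem U I (v2 V)"
proof -
  have "mso_sat U I v1 v2 (consistent_at_fm ar sem V f) \<longleftrightarrow>
     (ar f = 0 \<longrightarrow> (\<forall>y\<in>U. I (SConst f) [y] \<longrightarrow> (y \<in> v2 V \<longleftrightarrow> sem f []))) \<and>
     (ar f \<noteq> 0 \<longrightarrow> (\<forall>y\<in>U. (\<exists>x\<in>U. I (SConn f 1) [x,y]) \<longrightarrow>
        (y \<in> v2 V \<longleftrightarrow> (\<exists>bs. length bs = ar f \<and> sem f bs \<and>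
           (\<forall>i<ar f. \<exists>x\<in>U. I (SConn f (Suc i)) [x,y] \<and> (x \<in> v2 V \<longleftrightarrow> bs ! i))))))" for f
    by (cases "ar f = 0") (simp_all add: consistent_at_fm_def set_n_lists subset_code(1)
        atLeast0LessThan lessThan_iff Ball_def[of "{..<_}"] conj_assoc)
  then show ?thesis
    unfolding consistent_fm_def consistent_labelling_def using set_SOME_list[OF assms] by simp
qed

context
  fixes B :: "'f set" and ar :: "'f \<Rightarrow> nat" and sem :: "'f \<Rightarrow> bool list \<Rightarrow> bool"
    and W :: "'f form set" and D :: "'f default_rule set"
begin

abbreviation labelling :: "'f dl_elem set \<Rightarrow> bool" where
  "labelling V \<equiv> consistent_labelling B ar sem (dl_universe W D) (dl_rel W D) V"

lemma ex_arg_node_iff: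
  assumes "App f args \<in> dl_forms W D" and "i < length args"
  shows "(\<exists>x\<in>dl_universe W D. dl_rel W D (SConn f (Suc i)) [x, Inl (App f args)] \<and> P x)
           \<longleftrightarrow> P (Inl (args ! i))"
  using assms arg_in_dl_forms[OF assms(1) nth_mem[OF assms(2)]] by auto

lemma labelling_App_iff:
  assumes "App f args \<in> dl_forms W D" and "length args = ar f"
  shows "(\<exists>bs. length bs = ar f \<and> sem f bs \<and>
            (\<forall>i<ar f. \<exists>x\<in>dl_universe W D. dl_rel W D (SConn f (Suc i)) [x, Inl (App f args)] \<and>
                      (x \<in> V \<longleftrightarrow> bs ! i)))
         \<longleftrightarrow> sem f (map (\<lambda>a. Inl a \<in> V) args)"
proof -
  have "(\<forall>i<ar f. \<exists>x\<in>dl_universe W D. dl_rel W D (SConn f (Suc i)) [x, Inl (App f args)] \<and>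
                   (x \<in> V \<longleftrightarrow> bs ! i))
        \<longleftrightarrow> bs = map (\<lambda>a. Inl a \<in> V) args" if "length bs = ar f" for bs
    using that assms ex_arg_node_iff by (auto simp: list_eq_iff_nth_eq)
  moreover have "length (map (\<lambda>a. Inl a \<in> V) args) = ar f" using assms(2) by simp
  ultimately show ?thesis by blast
qed

lemma labelling_eval:
  assumes V: "labelling V" and "\<psi> \<in> dl_forms W D" and "is_Bform B ar \<psi>"
  shows "Inl \<psi> \<in> V \<longleftrightarrow> eval sem (\<lambda>n. Inl (Var n) \<in> V) \<psi>"
  using assms(2,3)
proof (induction \<psi>)
  case (App f args)
  have f: "f \<in> B" and l: "length args = ar f" and ab: "\<forall>a\<in>set args. is_Bform B ar a"
    using App.prems by auto
  have args: "map (\<lambda>a. Inl a \<in> V) args = map (eval sem (\<lambda>n. Inl (Var n) \<in> V)) args"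
    using App.IH arg_in_dl_forms[OF App.prems(1)] ab by auto
  show ?case
  proof (cases "ar f = 0")
    case True
    then show ?thesis using V f l App.prems(1) unfolding consistent_labelling_def by auto
  next
    case False
    then have "\<exists>x\<in>dl_universe W D. dl_rel W D (SConn f 1) [x, Inl (App f args)]"
      using ex_arg_node_iff[OF App.prems(1), of 0 "\<lambda>_. True"] l by simp
    then have "Inl (App f args) \<in> V \<longleftrightarrow> sem f (map (\<lambda>a. Inl a \<in> V) args)"
      using V f False App.prems(1) labelling_App_iff[OF App.prems(1) l]
      unfolding consistent_labelling_def by auto
    then show ?thesis using args by simp
  qed
qed simp_all

definition true_nodes :: "(nat \<Rightarrow> bool) \<Rightarrow> 'f dl_elem set" where
  "true_nodes v = Inl ` {\<psi> \<in> dl_forms W D. eval sem v \<psi>}"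

lemma Inl_in_true_nodes [simp]: "Inl \<psi> \<in> true_nodes v \<longleftrightarrow> \<psi> \<in> dl_forms W D \<and> eval sem v \<psi>"
  unfolding true_nodes_def by auto

lemma true_nodes_subset: "true_nodes v \<subseteq> dl_universe W D"
  unfolding true_nodes_def by auto

lemma labelling_true_nodes:
  assumes dt: "default_theory B ar W D"
  shows "labelling (true_nodes v)"
  unfolding consistent_labelling_def
proof (intro ballI conjI impI)
  fix f y assume "ar f = 0" "y \<in> dl_universe W D" "dl_rel W D (SConst f) [y]"
  then show "y \<in> true_nodes v \<longleftrightarrow> sem f []" by auto
next
  fix f y assume "ar f \<noteq> 0" and y: "y \<in> dl_universe W D"
    and "\<exists>x\<in>dl_universe W D. dl_rel W D (SConn f 1) [x, y]"
  then obtain args where y_eq: "y = Inl (App f args)" and app: "App f args \<in> dl_forms W D"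
    using y by auto
  have l: "length args = ar f" using App_in_dl_forms_is_Bform[OF dt app] by simp
  have args: "map (\<lambda>a. Inl a \<in> true_nodes v) args = map (eval sem v) args"
    using arg_in_dl_forms[OF app] by auto
  have "Inl (App f args) \<in> true_nodes v \<longleftrightarrow> sem f (map (eval sem v) args)"
    using app by simp
  then show "y \<in> true_nodes v \<longleftrightarrow> (\<exists>bs. length bs = ar f \<and> sem f bs \<and>
      (\<forall>i<ar f. \<exists>x\<in>dl_universe W D. dl_rel W D (SConn f (Suc i)) [x, y] \<and> (x \<in> true_nodes v \<longleftrightarrow> bs ! i)))"
    unfolding y_eq labelling_App_iff[OF app l] args .
qed

text \<open>Every valuation v induces the labelling true_nodes v, and every labelling V is the one
  induced by the valuation reading off the variable nodes in V.\<close>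
lemma all_labellings_iff_all_valuations:
  assumes dt: "default_theory B ar W D"
    and S: "\<forall>\<psi>\<in>S. \<psi> \<in> dl_forms W D \<and> is_Bform B ar \<psi>"
    and \<phi>: "\<phi> \<in> dl_forms W D" "is_Bform B ar \<phi>"
  shows "(\<forall>V\<subseteq>dl_universe W D. labelling V \<and> (\<forall>\<psi>\<in>S. Inl \<psi> \<in> V) \<longrightarrow> P (Inl \<phi> \<in> V))
     \<longleftrightarrow> (\<forall>v. (\<forall>\<psi>\<in>S. eval sem v \<psi>) \<longrightarrow> P (eval sem v \<phi>))"
proof
  assume lab: "\<forall>V\<subseteq>dl_universe W D. labelling V \<and> (\<forall>\<psi>\<in>S. Inl \<psi> \<in> V) \<longrightarrow> P (Inl \<phi> \<in> V)"
  show "\<forall>v. (\<forall>\<psi>\<in>S. eval sem v \<psi>) \<longrightarrow> P (eval sem v \<phi>)"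
  proof (intro allI impI)
    fix v assume "\<forall>\<psi>\<in>S. eval sem v \<psi>"
    then have "\<forall>\<psi>\<in>S. Inl \<psi> \<in> true_nodes v" using S by simp
    then have "P (Inl \<phi> \<in> true_nodes v)"
      using lab true_nodes_subset labelling_true_nodes[OF dt] by blast
    then show "P (eval sem v \<phi>)" using \<phi>(1) by simp
  qed
next
  assume val: "\<forall>v. (\<forall>\<psi>\<in>S. eval sem v \<psi>) \<longrightarrow> P (eval sem v \<phi>)"
  show "\<forall>V\<subseteq>dl_universe W D. labelling V \<and> (\<forall>\<psi>\<in>S. Inl \<psi> \<in> V) \<longrightarrow> P (Inl \<phi> \<in> V)"
  proof (intro allI impI)
    fix V assume "V \<subseteq> dl_universe W D" and V: "labelling V \<and> (\<forall>\<psi>\<in>S. Inl \<psi> \<in> V)"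
    then have "\<forall>\<psi>\<in>S. eval sem (\<lambda>n. Inl (Var n) \<in> V) \<psi>" using S labelling_eval by blast
    then show "P (Inl \<phi> \<in> V)" using val labelling_eval[of V \<phi>] V \<phi> by simp
  qed
qed

lemma labellings_decide_Cn:
  assumes dt: "default_theory B ar W D"
    and S: "\<forall>\<psi>\<in>S. \<psi> \<in> dl_forms W D \<and> is_Bform B ar \<psi>"
    and \<phi>: "\<phi> \<in> dl_forms W D" "is_Bform B ar \<phi>"
  shows "(\<forall>V\<subseteq>dl_universe W D. labelling V \<and> (\<forall>\<psi>\<in>S. Inl \<psi> \<in> V) \<longrightarrow> Inl \<phi> \<in> V)
           \<longleftrightarrow> \<phi> \<in> Cn B ar sem S"
    and "(\<forall>V\<subseteq>dl_universe W D. labelling V \<and> (\<forall>\<psi>\<in>S. Inl \<psi> \<in> V) \<longrightarrow> Inl \<phi> \<notin> V)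
           \<longleftrightarrow> Neg \<phi> \<in> Cn B ar sem S"
  using all_labellings_iff_all_valuations[OF assms, of "\<lambda>x. x"]
    all_labellings_iff_all_valuations[OF assms, of "\<lambda>x. \<not> x"] is_Bform_in_lang[OF \<phi>(2)]
  by (simp_all add: Cn_def)

end

definition defaults_in :: "'f default_rule set \<Rightarrow> 'f dl_elem set \<Rightarrow> 'f default_rule set" where
  "defaults_in D A = {d\<in>D. Inr d \<in> A}"

lemma defaults_in_subset: "defaults_in D A \<subseteq> D"
  unfolding defaults_in_def by blast

lemma defaults_in_image_Inr: "G \<subseteq> D \<Longrightarrow> defaults_in D (Inr ` G) = G"
  unfolding defaults_in_def by blast

lemma ex_defaults_in: "(\<exists>A\<subseteq>dl_universe W D. P (defaults_in D A)) \<longleftrightarrow> (\<exists>G\<subseteq>D. P G)"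
proof
  assume "\<exists>G\<subseteq>D. P G"
  then obtain G where "G \<subseteq> D" and "P G" by blast
  then have "Inr ` G \<subseteq> dl_universe W D" and "P (defaults_in D (Inr ` G))"
    using defaults_in_image_Inr[of G D] by auto
  then show "\<exists>A\<subseteq>dl_universe W D. P (defaults_in D A)" by blast
qed (use defaults_in_subset in blast)

lemma all_defaults_in: "(\<forall>A\<subseteq>dl_universe W D. P (defaults_in D A)) \<longleftrightarrow> (\<forall>G\<subseteq>D. P G)"
  using ex_defaults_in[of W D "\<lambda>G. \<not> P G"] by blast

lemma ball_default_iff:
  "(\<forall>e\<in>dl_universe W D. dl_rel W D SDefault [e] \<and> P e \<longrightarrow> Q e) \<longleftrightarrow> (\<forall>d\<in>D. P (Inr d) \<longrightarrow> Q (Inr d))"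
  by auto

lemma ball_just_iff:
  "d \<in> D \<Longrightarrow> (\<forall>b\<in>dl_universe W D. dl_rel W D SJust [b, Inr d] \<longrightarrow> P b) \<longleftrightarrow> P (Inl (fst (snd d)))"
  by (cases d) (auto dest: default_parts_in_dl_forms[where W = W])

lemma ex_prem_iff:
  "d \<in> D \<Longrightarrow> (\<exists>b\<in>dl_universe W D. dl_rel W D SPrem [b, Inr d] \<and> P b) \<longleftrightarrow> P (Inl (fst d))"
  by (cases d) (auto dest: default_parts_in_dl_forms[where W = W])

text \<open>Set variable 2 is bound to the labelling inside entails_fm and refutes_fm, hence the side
  conditions G \<noteq> 2 below.\<close>
definition base_holds_fm :: "nat \<Rightarrow> nat \<Rightarrow> 'f dl_sym mso" where
  "base_holds_fm V G = And (mso_all1 2 (mso_imp (Rel SKb [2]) (Mem 2 V)))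
     (mso_all1 5 (mso_imp (Mem 5 G) (mso_all1 2 (mso_imp (Rel SConcl [2,5]) (Mem 2 V)))))"

definition entails_fm :: "'f set \<Rightarrow> ('f \<Rightarrow> nat) \<Rightarrow> ('f \<Rightarrow> bool list \<Rightarrow> bool) \<Rightarrow> nat \<Rightarrow> nat \<Rightarrow> 'f dl_sym mso" where
  "entails_fm B ar sem G x =
     mso_all2 2 (mso_imp (And (consistent_fm B ar sem 2) (base_holds_fm 2 G)) (Mem x 2))"

definition refutes_fm :: "'f set \<Rightarrow> ('f \<Rightarrow> nat) \<Rightarrow> ('f \<Rightarrow> bool list \<Rightarrow> bool) \<Rightarrow> nat \<Rightarrow> nat \<Rightarrow> 'f dl_sym mso" where
  "refutes_fm B ar sem G x =
     mso_all2 2 (mso_imp (And (consistent_fm B ar sem 2) (base_holds_fm 2 G)) (Not (Mem x 2)))"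

definition closed_fm :: "'f set \<Rightarrow> ('f \<Rightarrow> nat) \<Rightarrow> ('f \<Rightarrow> bool list \<Rightarrow> bool) \<Rightarrow> nat \<Rightarrow> nat \<Rightarrow> 'f dl_sym mso" where
  "closed_fm B ar sem E H = mso_all1 0 (mso_imp
     (And (Rel SDefault [0]) (And (Not (Ex1 1 (And (Rel SJust [1,0]) (refutes_fm B ar sem E 1))))
                                  (Ex1 1 (And (Rel SPrem [1,0]) (entails_fm B ar sem H 1)))))
     (Mem 0 H))"

definition extension_fm :: "'f set \<Rightarrow> ('f \<Rightarrow> nat) \<Rightarrow> ('f \<Rightarrow> bool list \<Rightarrow> bool) \<Rightarrow> 'f dl_sym mso" where
  "extension_fm B ar sem = Ex2 0 (And (closed_fm B ar sem 0 0)
     (mso_all2 1 (mso_imp (closed_fm B ar sem 0 1)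
        (mso_all1 0 (mso_imp (Rel SDefault [0]) (mso_imp (Mem 0 0) (Mem 0 1)))))))"

lemma mso_sentence_extension_fm: "mso_sentence (extension_fm B ar sem)"
  using fv_consistent_fm[of B ar sem]
  by (auto simp: mso_sentence_def extension_fm_def closed_fm_def entails_fm_def refutes_fm_def
      base_holds_fm_def)

lemma mso_over_extension_fm:
  "finite B \<Longrightarrow> mso_over (in_tau_dl B ar) dl_arity (extension_fm B ar sem)"
  using mso_over_consistent_fm[of B ar sem]
  by (simp add: extension_fm_def closed_fm_def entails_fm_def refutes_fm_def base_holds_fm_def)

lemma sat_base_holds_fm:
  "mso_sat (dl_universe W D) (dl_rel W D) v1 v2 (base_holds_fm V G) \<longleftrightarrow>
     (\<forall>\<psi>\<in>concl_base W (defaults_in D (v2 G)). Inl \<psi> \<in> v2 V)"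
proof -
  let ?U = "dl_universe W D" and ?I = "dl_rel W D"
  have kb: "(\<forall>a\<in>?U. ?I SKb [a] \<longrightarrow> a \<in> v2 V) \<longleftrightarrow> (\<forall>\<psi>\<in>W. Inl \<psi> \<in> v2 V)"
    using kb_in_dl_forms by auto
  have concl: "(\<forall>z\<in>?U. z \<in> v2 G \<longrightarrow> (\<forall>a\<in>?U. ?I SConcl [a,z] \<longrightarrow> a \<in> v2 V)) \<longleftrightarrow>
      (\<forall>\<psi>\<in>(\<lambda>d. snd (snd d)) ` defaults_in D (v2 G). Inl \<psi> \<in> v2 V)"
  proof
    assume "\<forall>z\<in>?U. z \<in> v2 G \<longrightarrow> (\<forall>a\<in>?U. ?I SConcl [a,z] \<longrightarrow> a \<in> v2 V)"
    then show "\<forall>\<psi>\<in>(\<lambda>d. snd (snd d)) ` defaults_in D (v2 G). Inl \<psi> \<in> v2 V"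
      using default_parts_in_dl_forms[where W = W and D = D] by (fastforce simp: defaults_in_def)
  qed (force simp: defaults_in_def)
  show ?thesis
    unfolding concl_base_def ball_Un kb[symmetric] concl[symmetric] base_holds_fm_def by simp
qed

lemma sat_entails_fm:
  assumes fB: "finite B" and dt: "default_theory B ar W D" and G: "G \<noteq> 2"
    and x: "v1 x = Inl \<phi>" and \<phi>: "\<phi> \<in> dl_forms W D" "is_Bform B ar \<phi>"
  shows "mso_sat (dl_universe W D) (dl_rel W D) v1 v2 (entails_fm B ar sem G x) \<longleftrightarrow>
           \<phi> \<in> Cn B ar sem (concl_base W (defaults_in D (v2 G)))"
    and "mso_sat (dl_universe W D) (dl_rel W D) v1 v2 (refutes_fm B ar sem G x) \<longleftrightarrow>
           Neg \<phi> \<in> Cn B ar sem (concl_base W (defaults_in D (v2 G)))"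
  using G x labellings_decide_Cn[OF dt concl_base_in_dl_forms[OF dt defaults_in_subset] \<phi>]
  by (simp_all add: entails_fm_def refutes_fm_def sat_consistent_fm[OF fB] sat_base_holds_fm)

lemma sat_closed_fm:
  assumes fB: "finite B" and dt: "default_theory B ar W D" and "E \<noteq> 2" "H \<noteq> 2"
  shows "mso_sat (dl_universe W D) (dl_rel W D) v1 v2 (closed_fm B ar sem E H) \<longleftrightarrow>
    closed_under_defaults B ar sem W D (Cn B ar sem (concl_base W (defaults_in D (v2 E))))
      (defaults_in D (v2 H))"
proof -
  let ?U = "dl_universe W D" and ?I = "dl_rel W D"
  let ?at = "\<lambda>d b. v1(0 := Inr d, 1 := b)"
  have parts: "fst d \<in> dl_forms W D \<and> is_Bform B ar (fst d) \<and>
      fst (snd d) \<in> dl_forms W D \<and> is_Bform B ar (fst (snd d))" if "d \<in> D" for d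
    using that dt default_parts_in_dl_forms[where W = W and D = D]
    unfolding default_theory_def by (cases d) fastforce
  have "mso_sat ?U ?I v1 v2 (closed_fm B ar sem E H) \<longleftrightarrow>
      (\<forall>d\<in>D. \<not> mso_sat ?U ?I (?at d (Inl (fst (snd d)))) v2 (refutes_fm B ar sem E 1) \<and>
              mso_sat ?U ?I (?at d (Inl (fst d))) v2 (entails_fm B ar sem H 1) \<longrightarrow> Inr d \<in> v2 H)"
    unfolding closed_fm_def by (simp add: ball_default_iff ball_just_iff ex_prem_iff del: dl_rel.simps)
  also have "\<dots> \<longleftrightarrow> closed_under_defaults B ar sem W D
      (Cn B ar sem (concl_base W (defaults_in D (v2 E)))) (defaults_in D (v2 H))"
    using assms(3,4) parts
    by (auto simp: closed_under_defaults_def defaults_in_def sat_entails_fm[OF fB dt])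
  finally show ?thesis .
qed

lemma sat_extension_fm:
  assumes fB: "finite B" and dt: "default_theory B ar W D"
  shows "mso_sat (dl_universe W D) (dl_rel W D) v1 v2 (extension_fm B ar sem) \<longleftrightarrow>
           (\<exists>G. least_closed_generators B ar sem W D G)"
proof -
  let ?C = "\<lambda>G H. closed_under_defaults B ar sem W D (Cn B ar sem (concl_base W G)) H"
  have "(\<forall>e\<in>dl_universe W D. dl_rel W D SDefault [e] \<longrightarrow> e \<in> A \<longrightarrow> e \<in> A')
      \<longleftrightarrow> defaults_in D A \<subseteq> defaults_in D A'" for A A'
    by (auto simp: defaults_in_def)
  then have "mso_sat (dl_universe W D) (dl_rel W D) v1 v2 (extension_fm B ar sem) \<longleftrightarrow>
      (\<exists>A\<subseteq>dl_universe W D. ?C (defaults_in D A) (defaults_in D A) \<and>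
         (\<forall>A'\<subseteq>dl_universe W D. ?C (defaults_in D A) (defaults_in D A') \<longrightarrow>
            defaults_in D A \<subseteq> defaults_in D A'))"
    unfolding extension_fm_def by (simp add: sat_closed_fm[OF fB dt] del: dl_rel.simps)
  also have "\<dots> \<longleftrightarrow> (\<exists>G\<subseteq>D. ?C G G \<and> (\<forall>H\<subseteq>D. ?C G H \<longrightarrow> G \<subseteq> H))"
    unfolding all_defaults_in[where P = "\<lambda>H. ?C _ H \<longrightarrow> _ \<subseteq> H"]
    by (rule ex_defaults_in)
  finally show ?thesis unfolding least_closed_generators_def by blast
qed

theorem lemma3:
  fixes B :: "'f set" and ar :: "'f \<Rightarrow> nat" and sem :: "'f \<Rightarrow> bool list \<Rightarrow> bool"
  assumes "finite B"
  shows "\<exists>\<theta> :: 'f dl_sym mso. mso_sentence \<theta> \<and> mso_over (in_tau_dl B ar) dl_arity \<theta> \<and>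
           (\<forall>W D. default_theory B ar W D \<longrightarrow>
              (has_stable_extension B ar sem W D \<longleftrightarrow> models (dl_universe W D) (dl_rel W D) \<theta>))"
proof (intro exI conjI allI impI)
  show "mso_sentence (extension_fm B ar sem)" by (rule mso_sentence_extension_fm)
  show "mso_over (in_tau_dl B ar) dl_arity (extension_fm B ar sem)"
    using assms by (rule mso_over_extension_fm)
  fix W D assume dt: "default_theory B ar W D"
  show "has_stable_extension B ar sem W D \<longleftrightarrow> models (dl_universe W D) (dl_rel W D) (extension_fm B ar sem)"
    unfolding models_def sat_extension_fm[OF assms dt]
    by (rule has_stable_extension_iff_least_closed_generators[OF dt])
qed

end
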